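(* Let $\Omega=(0,L)^2$ with periodic boundary conditions, $M$ a positive integer, $h=L/M$, $\mathbb{V}_h\cong\mathbb{R}^{M^2}$ the grid functions on the periodic grid $\{(ih,jh):1\le i,j\le M\}$ with maximum norm $\|v\|_\infty=\max|v_{i,j}|$, $\Lambda_h$ the standard five-point central-difference matrix of the Laplacian with periodic boundary conditions, and $\varepsilon>0$. Let $0=t_0<\dots<t_N=T$, $\tau_k=t_k-t_{k-1}$, $r_k=\tau_k/\tau_{k-1}$ for $2\le k\le N$, $r_1:=0$. Let $u^n\in\mathbb{V}_h$ solve $$D_2u^n=\varepsilon^2\Lambda_hu^n-f(u^n),\qquad 1\le n\le N,$$ where $f(u)=u^3-u$ componentwise, $D_2u^1=(u^1-u^0)/\tau_1$ and for $n\ge2$ $D_2u^n=\frac{1+2r_n}{\tau_n(1+r_n)}(u^n-u^{n-1})-\frac{r_n^2}{\tau_n(1+r_n)}(u^{n-1}-u^{n-2})$. Let $r_s\in[1,1+\sqrt2)$ satisfy $0<r_k\le r_s$ for all $2\le k\le N$ (in particular $0<r_k<1+\sqrt2$), set $\eta=\frac{2r_s^2}{(1+r_s)^2}$, and assume $$\tau_n\le\frac{(1+2r_n)\eta-r_n^2}{\eta^2(1+r_n)}\cdot\frac{1-\eta}{2+4\varepsilon^2h^{-2}}\quad\text{for } n\ge1.$$ If $\|u^0\|_\infty\le1$, then $\|u^k\|_\infty\le1$ for $1\le k\le N$. *)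

theory Defs
  imports Complex_Main
begin

text \<open>Grid functions on the periodic M x M grid are functions nat => nat => real,
  indexed by 0 <= i, j < M (index i stands for grid point ((i+1) h, (j+1) h));
  only values with i, j < M are relevant.\<close>

type_synonym grid_fun = "nat \<Rightarrow> nat \<Rightarrow> real"

definition grid_maxnorm :: "nat \<Rightarrow> grid_fun \<Rightarrow> real" where
  "grid_maxnorm M v = Max {\<bar>v i j\<bar> | i j. i < M \<and> j < M}"

definition lap_h :: "nat \<Rightarrow> real \<Rightarrow> grid_fun \<Rightarrow> grid_fun" where
  "lap_h M h v i j =
     (v ((i + 1) mod M) j + v ((i + M - 1) mod M) j
      + v i ((j + 1) mod M) + v i ((j + M - 1) mod M) - 4 * v i j) / h\<^sup>2"

definition cubic_f :: "real \<Rightarrow> real" where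
  "cubic_f u = u ^ 3 - u"

definition step :: "(nat \<Rightarrow> real) \<Rightarrow> nat \<Rightarrow> real" where
  "step t k = t k - t (k - 1)"

definition ratio :: "(nat \<Rightarrow> real) \<Rightarrow> nat \<Rightarrow> real" where
  "ratio t k = (if k \<le> 1 then 0 else step t k / step t (k - 1))"

definition D2 :: "(nat \<Rightarrow> real) \<Rightarrow> (nat \<Rightarrow> grid_fun) \<Rightarrow> nat \<Rightarrow> grid_fun" where
  "D2 t u n i j =
     (if n = 1 then (u 1 i j - u 0 i j) / step t 1
      else (1 + 2 * ratio t n) / (step t n * (1 + ratio t n)) * (u n i j - u (n - 1) i j)
           - (ratio t n)\<^sup>2 / (step t n * (1 + ratio t n)) * (u (n - 1) i j - u (n - 2) i j))"

end

theory Submission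
  imports Defs
begin

(* Write D_2 u^n = b0 (u^n - u^(n-1)) - b1 (u^(n-1) - u^(n-2)) and carry along, besides |u^n| <= 1,
   the bound |u^n - eta u^(n-1)| <= 1 - eta. The BDF2 quotient equals
   b0 (u^n - eta u^(n-1)) - (b1/eta) (u^(n-1) - eta u^(n-2)) - c u^(n-1) with c = (1 - eta) (b0 - b1/eta),
   and the step-size restriction amounts to c >= eta (2 + 4 eps^2/h^2). As c >= 0, the discrete maximum
   principle at an extremal grid point gives |u^n| <= 1. Adding (c/eta) (u^n - eta u^(n-1)) to both
   sides then writes (b0 + c/eta) (u^n - eta u^(n-1)) as a sum of bounded terms; the cubic enters as
   (K + 1) u^n - (u^n)^3 with K = c/eta - 4 eps^2/h^2 >= 2, which maps [-1, 1] into [-K, K]. *)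

lemma bdf2_split:
  fixes \<eta> b0 b1 x y z :: real
  assumes "\<eta> \<noteq> 0"
  shows "b0 * (x - y) - b1 * (y - z)
    = b0 * (x - \<eta> * y) - b1 / \<eta> * (y - \<eta> * z) - (1 - \<eta>) * (b0 - b1 / \<eta>) * y"
  using assms by (simp add: field_simps)

lemma bdf2_point_upper:
  fixes \<eta> b0 b1 x y z :: real
  assumes "0 < \<eta>" "\<eta> < 1" "0 < b0" "0 \<le> b1" "0 \<le> (1 - \<eta>) * (b0 - b1 / \<eta>)"
    and "y \<le> 1" "y - \<eta> * z \<le> 1 - \<eta>"
    and "b0 * (x - y) - b1 * (y - z) \<le> x - x ^ 3"
  shows "x \<le> 1"
proof (rule ccontr)
  assume "\<not> x \<le> 1"
  then have "x > 1" by simp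
  let ?c = "(1 - \<eta>) * (b0 - b1 / \<eta>)"
  have "b0 * (x - 1) = b0 * (x - \<eta>) - b1 / \<eta> * (1 - \<eta>) - ?c"
    using assms(1) by (simp add: field_simps)
  also have "\<dots> \<le> b0 * (x - \<eta> * y) - b1 / \<eta> * (y - \<eta> * z) - ?c * y"
  proof -
    have "b0 * (\<eta> * y) \<le> b0 * \<eta>" using assms(1,3,6) by simp
    moreover have "b1 / \<eta> * (y - \<eta> * z) \<le> b1 / \<eta> * (1 - \<eta>)"
      using assms(1,4,7) by (intro mult_left_mono) auto
    moreover have "?c * y \<le> ?c" using assms(5,6) by (simp add: mult_left_le)
    ultimately show ?thesis by (simp add: algebra_simps)
  qed
  also have "\<dots> = b0 * (x - y) - b1 * (y - z)"
    using bdf2_split[of \<eta>] assms(1) by simp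
  also have "\<dots> \<le> x - x ^ 3" by (fact assms(8))
  also have "\<dots> < 0"
  proof -
    have "x * ((x - 1) * (x + 1)) > 0" using \<open>x > 1\<close> by simp
    then show ?thesis by (simp add: algebra_simps power3_eq_cube)
  qed
  finally have "b0 * (x - 1) < 0" .
  moreover have "0 < b0 * (x - 1)" using \<open>x > 1\<close> assms(3) by simp
  ultimately show False by linarith
qed

lemma abs_cubic_le:
  fixes K x :: real
  assumes "2 \<le> K" "\<bar>x\<bar> \<le> 1"
  shows "\<bar>(K + 1) * x - x ^ 3\<bar> \<le> K"
proof -
  have "x\<^sup>2 \<le> 1" using assms(2) by (simp add: abs_square_le_1)
  then have "0 \<le> (1 - x) * (K - x - x\<^sup>2)" "0 \<le> (1 + x) * (K + x - x\<^sup>2)"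
    using assms by (auto intro!: mult_nonneg_nonneg)
  then show ?thesis
    by (simp add: abs_le_iff algebra_simps power2_eq_square power3_eq_cube)
qed

lemma bdf2_point_stable:
  fixes \<eta> b0 b1 s x y z q :: real
  assumes "0 < \<eta>" "\<eta> < 1" "0 < b0" "0 \<le> b1" "0 \<le> s"
    and coeff: "\<eta> * (2 + 4 * s) \<le> (1 - \<eta>) * (b0 - b1 / \<eta>)"
    and "\<bar>x\<bar> \<le> 1" "\<bar>y - \<eta> * z\<bar> \<le> 1 - \<eta>" "\<bar>q\<bar> \<le> 4"
    and eq: "b0 * (x - y) - b1 * (y - z) = s * (q - 4 * x) - (x ^ 3 - x)"
  shows "\<bar>x - \<eta> * y\<bar> \<le> 1 - \<eta>"
proof -
  define \<kappa> where "\<kappa> = (1 - \<eta>) * (b0 - b1 / \<eta>) / \<eta>"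
  have \<kappa>: "\<eta> * \<kappa> = (1 - \<eta>) * (b0 - b1 / \<eta>)" "2 + 4 * s \<le> \<kappa>"
    using assms(1) coeff by (simp_all add: \<kappa>_def pos_le_divide_eq mult.commute)
  have "b0 * (x - y) - b1 * (y - z) = b0 * (x - \<eta> * y) - b1 / \<eta> * (y - \<eta> * z) - \<eta> * \<kappa> * y"
    using bdf2_split[of \<eta> b0 x y b1 z] assms(1) \<kappa>(1) by simp
  then have "(b0 + \<kappa>) * (x - \<eta> * y) = b1 / \<eta> * (y - \<eta> * z) + (((\<kappa> - 4 * s) + 1) * x - x ^ 3) + s * q"
    using eq by (simp add: algebra_simps)
  moreover have "\<bar>b1 / \<eta> * (y - \<eta> * z)\<bar> \<le> b1 / \<eta> * (1 - \<eta>)"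
    using assms(1,4,8) abs_mult abs_of_nonneg mult_left_mono
    by (metis divide_nonneg_pos)
  moreover have "\<bar>((\<kappa> - 4 * s) + 1) * x - x ^ 3\<bar> \<le> \<kappa> - 4 * s"
    using abs_cubic_le \<kappa>(2) assms(7) by simp
  moreover have "\<bar>s * q\<bar> \<le> s * 4"
    using assms(5,9) by (simp add: abs_mult mult_left_mono)
  ultimately have "\<bar>(b0 + \<kappa>) * (x - \<eta> * y)\<bar> \<le> b1 / \<eta> * (1 - \<eta>) + (\<kappa> - 4 * s) + s * 4"
    unfolding abs_le_iff by linarith
  also have "\<dots> = (b0 + \<kappa>) * (1 - \<eta>)"
    using assms(1) \<kappa>(1) by (simp add: field_simps)
  finally show ?thesis
    using assms(3) \<kappa>(2) assms(5) by (simp add: abs_mult mult_le_cancel_left_pos)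
qed

lemma grid_maxnorm_le_iff:
  assumes "M > 0"
  shows "grid_maxnorm M v \<le> c \<longleftrightarrow> (\<forall>i<M. \<forall>j<M. \<bar>v i j\<bar> \<le> c)"
proof -
  have "{\<bar>v i j\<bar> | i j. i < M \<and> j < M} = (\<lambda>(i, j). \<bar>v i j\<bar>) ` ({..<M} \<times> {..<M})"
    by auto
  then show ?thesis
    unfolding grid_maxnorm_def using assms by (subst Max_le_iff) auto
qed

lemma grid_has_argmax:
  fixes v :: grid_fun
  assumes "M > 0"
  obtains i0 j0 where "i0 < M" "j0 < M" "\<And>i j. i < M \<Longrightarrow> j < M \<Longrightarrow> v i j \<le> v i0 j0"
proof -
  let ?S = "case_prod v ` ({..<M} \<times> {..<M})"
  have "Max ?S \<in> ?S"
    using assms by (intro Max_in) auto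
  moreover have "\<And>i j. i < M \<Longrightarrow> j < M \<Longrightarrow> v i j \<le> Max ?S"
    by (intro Max_ge) auto
  ultimately show ?thesis
    using that by auto
qed

lemma lap_h_nonpos_at_max:
  assumes "M > 0" "i0 < M" "j0 < M" and max: "\<And>i j. i < M \<Longrightarrow> j < M \<Longrightarrow> v i j \<le> v i0 j0"
  shows "lap_h M h v i0 j0 \<le> 0"
proof -
  have "v ((i0 + 1) mod M) j0 \<le> v i0 j0" "v ((i0 + M - 1) mod M) j0 \<le> v i0 j0"
    "v i0 ((j0 + 1) mod M) \<le> v i0 j0" "v i0 ((j0 + M - 1) mod M) \<le> v i0 j0"
    using assms by (auto intro!: max)
  then show ?thesis
    unfolding lap_h_def by (intro divide_nonpos_nonneg) auto
qed

lemma lap_h_uminus: "lap_h M h (\<lambda>i j. - v i j) i j = - lap_h M h v i j"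
  unfolding lap_h_def by argo

lemma abs_scaled_lap_h_plus_le:
  assumes "M > 0" "h \<noteq> 0" "i < M" "j < M" and bound: "\<And>i j. i < M \<Longrightarrow> j < M \<Longrightarrow> \<bar>v i j\<bar> \<le> 1"
  shows "\<bar>h\<^sup>2 * lap_h M h v i j + 4 * v i j\<bar> \<le> 4"
proof -
  have "\<bar>v ((i + 1) mod M) j\<bar> \<le> 1" "\<bar>v ((i + M - 1) mod M) j\<bar> \<le> 1"
    "\<bar>v i ((j + 1) mod M)\<bar> \<le> 1" "\<bar>v i ((j + M - 1) mod M)\<bar> \<le> 1"
    using assms by (auto intro!: bound)
  then show ?thesis
    using assms(2) unfolding lap_h_def by (simp add: abs_le_iff)
qed

lemma cubic_f_uminus: "cubic_f (- x) = - cubic_f x"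
  by (simp add: cubic_f_def)

lemma D2_bdf2_form:
  "D2 t u n i j = (1 + 2 * ratio t n) / (step t n * (1 + ratio t n)) * (u n i j - u (n - 1) i j)
     - (ratio t n)\<^sup>2 / (step t n * (1 + ratio t n)) * (u (n - 1) i j - u (n - 2) i j)"
  by (simp add: D2_def ratio_def)

lemma bdf2_eta_bounds:
  fixes r :: real
  assumes "0 < r" "r < 1 + sqrt 2"
  shows "0 < 2 * r\<^sup>2 / (1 + r)\<^sup>2" "2 * r\<^sup>2 / (1 + r)\<^sup>2 < 1"
proof -
  have "1 < sqrt 2" by simp
  then have "\<bar>r - 1\<bar> < sqrt 2"
    using assms unfolding abs_less_iff by linarith
  then have "\<bar>r - 1\<bar>\<^sup>2 < (sqrt 2)\<^sup>2"
    by (rule power_strict_mono) auto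
  then have "2 * r\<^sup>2 < (1 + r)\<^sup>2"
    by (simp add: power2_eq_square algebra_simps)
  moreover have "0 < (1 + r)\<^sup>2" using assms(1) by simp
  ultimately show "2 * r\<^sup>2 / (1 + r)\<^sup>2 < 1" by (simp add: pos_divide_less_eq)
  show "0 < 2 * r\<^sup>2 / (1 + r)\<^sup>2" using assms(1) by simp
qed

lemma bdf2_step_restriction:
  fixes \<tau> r \<eta> K :: real
  assumes "0 < \<tau>" "0 \<le> r" "0 < \<eta>" "0 < K"
    and "\<tau> \<le> ((1 + 2 * r) * \<eta> - r\<^sup>2) / (\<eta>\<^sup>2 * (1 + r)) * ((1 - \<eta>) / K)"
  shows "\<eta> * K \<le> (1 - \<eta>) * ((1 + 2 * r) / (\<tau> * (1 + r)) - r\<^sup>2 / (\<tau> * (1 + r)) / \<eta>)"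
proof -
  define X where "X = ((1 + 2 * r) * \<eta> - r\<^sup>2) / (\<eta>\<^sup>2 * (1 + r))"
  have "(1 + 2 * r) / (\<tau> * (1 + r)) - r\<^sup>2 / (\<tau> * (1 + r)) / \<eta>
      = ((1 + 2 * r) * \<eta> - r\<^sup>2) / (\<eta> * (\<tau> * (1 + r)))"
    using assms(1-3) by (simp add: diff_divide_distrib)
  also have "\<dots> = \<eta> * X / \<tau>"
    using assms(1-3) by (simp add: X_def power2_eq_square)
  finally have coeff_eq: "(1 + 2 * r) / (\<tau> * (1 + r)) - r\<^sup>2 / (\<tau> * (1 + r)) / \<eta> = \<eta> * X / \<tau>" .
  have "\<tau> \<le> X * ((1 - \<eta>) / K)"
    using assms(5) unfolding X_def .
  then have "\<tau> * K \<le> (1 - \<eta>) * X"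
    using assms(4) by (simp add: field_simps)
  then have "\<eta> * (\<tau> * K) \<le> \<eta> * ((1 - \<eta>) * X)"
    using assms(3) by simp
  then have "\<eta> * K \<le> (1 - \<eta>) * (\<eta> * X / \<tau>)"
    using assms(1) by (simp add: field_simps)
  then show ?thesis
    unfolding coeff_eq .
qed

definition bdf2_bounded :: "nat \<Rightarrow> real \<Rightarrow> grid_fun \<Rightarrow> grid_fun \<Rightarrow> bool" where
  "bdf2_bounded M \<eta> v w \<longleftrightarrow> (\<forall>i<M. \<forall>j<M. \<bar>v i j\<bar> \<le> 1 \<and> \<bar>v i j - \<eta> * w i j\<bar> \<le> 1 - \<eta>)"

lemma bdf2_bounded_self:
  assumes "\<eta> \<le> 1" and bound: "\<And>i j. i < M \<Longrightarrow> j < M \<Longrightarrow> \<bar>v i j\<bar> \<le> 1"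
  shows "bdf2_bounded M \<eta> v v"
proof -
  have "\<bar>v i j - \<eta> * v i j\<bar> \<le> 1 - \<eta>" if "i < M" "j < M" for i j
  proof -
    have "v i j - \<eta> * v i j = (1 - \<eta>) * v i j"
      by (simp add: algebra_simps)
    then show ?thesis
      using bound[OF that] assms(1) by (simp add: abs_mult mult_left_le)
  qed
  then show ?thesis
    using bound unfolding bdf2_bounded_def by blast
qed

lemma bdf2_grid_upper:
  fixes x y z :: grid_fun
  assumes "M > 0" "0 \<le> d" "0 < \<eta>" "\<eta> < 1" "0 < b0" "0 \<le> b1" "0 \<le> (1 - \<eta>) * (b0 - b1 / \<eta>)"
    and prev: "\<And>i j. i < M \<Longrightarrow> j < M \<Longrightarrow> y i j \<le> 1 \<and> y i j - \<eta> * z i j \<le> 1 - \<eta>"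
    and scheme: "\<And>i j. i < M \<Longrightarrow> j < M \<Longrightarrow>
      b0 * (x i j - y i j) - b1 * (y i j - z i j) = d * lap_h M h x i j - cubic_f (x i j)"
    and "i < M" "j < M"
  shows "x i j \<le> 1"
proof -
  obtain i0 j0 where ij0: "i0 < M" "j0 < M" and max: "\<And>i j. i < M \<Longrightarrow> j < M \<Longrightarrow> x i j \<le> x i0 j0"
    using grid_has_argmax[OF assms(1)] by blast
  have "d * lap_h M h x i0 j0 \<le> 0"
    using lap_h_nonpos_at_max[where v = x, OF assms(1) ij0 max] assms(2) by (simp add: mult_nonneg_nonpos)
  then have "b0 * (x i0 j0 - y i0 j0) - b1 * (y i0 j0 - z i0 j0) \<le> x i0 j0 - x i0 j0 ^ 3"
    using scheme[OF ij0] by (simp add: cubic_f_def)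
  then have "x i0 j0 \<le> 1"
    using bdf2_point_upper[OF assms(3-7)] prev[OF ij0] by blast
  then show ?thesis
    using max[OF assms(10,11)] by simp
qed

lemma bdf2_grid_step:
  fixes x y z :: grid_fun
  assumes "M > 0" "0 < h" "0 \<le> d" "0 < \<eta>" "\<eta> < 1" "0 < b0" "0 \<le> b1"
    and coeff: "\<eta> * (2 + 4 * d / h\<^sup>2) \<le> (1 - \<eta>) * (b0 - b1 / \<eta>)"
    and prev: "bdf2_bounded M \<eta> y z"
    and scheme: "\<And>i j. i < M \<Longrightarrow> j < M \<Longrightarrow>
      b0 * (x i j - y i j) - b1 * (y i j - z i j) = d * lap_h M h x i j - cubic_f (x i j)"
  shows "bdf2_bounded M \<eta> x y"
proof -
  have coeff': "\<eta> * (2 + 4 * (d / h\<^sup>2)) \<le> (1 - \<eta>) * (b0 - b1 / \<eta>)"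
    using coeff by simp
  have "0 \<le> \<eta> * (2 + 4 * (d / h\<^sup>2))"
    using assms(3,4) by simp
  then have c: "0 \<le> (1 - \<eta>) * (b0 - b1 / \<eta>)"
    using coeff' by linarith
  have prev_upper: "y i j \<le> 1 \<and> y i j - \<eta> * z i j \<le> 1 - \<eta>"
    and prev_lower: "- y i j \<le> 1 \<and> - y i j - \<eta> * - z i j \<le> 1 - \<eta>" if "i < M" "j < M" for i j
    using prev that unfolding bdf2_bounded_def by (auto simp: abs_le_iff)
  have "x i j \<le> 1" if "i < M" "j < M" for i j
    using bdf2_grid_upper[OF assms(1,3-7) c prev_upper scheme that] by blast
  moreover have "- x i j \<le> 1" if "i < M" "j < M" for i j
  proof (rule bdf2_grid_upper[OF assms(1,3-7) c prev_lower _ that])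
    fix i j assume "i < M" "j < M"
    then show "b0 * (- x i j - - y i j) - b1 * (- y i j - - z i j)
      = d * lap_h M h (\<lambda>i j. - x i j) i j - cubic_f (- x i j)"
      using scheme by (simp add: lap_h_uminus cubic_f_uminus algebra_simps)
  qed
  ultimately have bound: "\<bar>x i j\<bar> \<le> 1" if "i < M" "j < M" for i j
    using that by (simp add: abs_le_iff)
  have "\<bar>x i j - \<eta> * y i j\<bar> \<le> 1 - \<eta>" if "i < M" "j < M" for i j
  proof (rule bdf2_point_stable[OF assms(4-7) _ coeff' bound[OF that]])
    show "\<bar>y i j - \<eta> * z i j\<bar> \<le> 1 - \<eta>"
      using prev that unfolding bdf2_bounded_def by blast
    show "\<bar>h\<^sup>2 * lap_h M h x i j + 4 * x i j\<bar> \<le> 4"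
      by (rule abs_scaled_lap_h_plus_le) (use assms(1,2) that bound in auto)
    show "b0 * (x i j - y i j) - b1 * (y i j - z i j)
      = d / h\<^sup>2 * (h\<^sup>2 * lap_h M h x i j + 4 * x i j - 4 * x i j) - (x i j ^ 3 - x i j)"
      using scheme[OF that] assms(2) by (simp add: cubic_f_def)
  qed (use assms(3) in simp)
  with bound show ?thesis
    unfolding bdf2_bounded_def by blast
qed

lemma D2_step_bdf2_bounded:
  fixes u :: "nat \<Rightarrow> grid_fun"
  assumes "M > 0" "0 < h" "0 \<le> d" "0 < \<eta>" "\<eta> < 1" "0 < step t n" "0 \<le> ratio t n"
    and restriction: "step t n \<le> ((1 + 2 * ratio t n) * \<eta> - (ratio t n)\<^sup>2) / (\<eta>\<^sup>2 * (1 + ratio t n))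
      * ((1 - \<eta>) / (2 + 4 * d / h\<^sup>2))"
    and prev: "bdf2_bounded M \<eta> (u (n - 1)) (u (n - 2))"
    and scheme: "\<And>i j. i < M \<Longrightarrow> j < M \<Longrightarrow> D2 t u n i j = d * lap_h M h (u n) i j - cubic_f (u n i j)"
  shows "bdf2_bounded M \<eta> (u n) (u (n - 1))"
proof (rule bdf2_grid_step[OF assms(1-5) _ _ _ prev])
  show "\<eta> * (2 + 4 * d / h\<^sup>2) \<le> (1 - \<eta>) * ((1 + 2 * ratio t n) / (step t n * (1 + ratio t n))
      - (ratio t n)\<^sup>2 / (step t n * (1 + ratio t n)) / \<eta>)"
    using assms(2,3) by (intro bdf2_step_restriction[OF assms(6,7,4) _ restriction]) (simp add: add_pos_nonneg)
qed (use assms(6,7) scheme in \<open>simp_all add: D2_bdf2_form\<close>)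

theorem theorem4p1:
  fixes L \<epsilon> T r\<^sub>s :: real and M N :: nat and t :: "nat \<Rightarrow> real"
    and u :: "nat \<Rightarrow> grid_fun"
  assumes "L > 0" and "M > 0" and "\<epsilon> > 0"
    and "t 0 = 0" and "t N = T"
    and "\<And>k. 1 \<le> k \<Longrightarrow> k \<le> N \<Longrightarrow> t (k - 1) < t k"
    and scheme: "\<And>n i j. 1 \<le> n \<Longrightarrow> n \<le> N \<Longrightarrow> i < M \<Longrightarrow> j < M \<Longrightarrow>
       D2 t u n i j = \<epsilon>\<^sup>2 * lap_h M (L / real M) (u n) i j - cubic_f (u n i j)"
    and "1 \<le> r\<^sub>s" and "r\<^sub>s < 1 + sqrt 2"
    and "\<And>k. 2 \<le> k \<Longrightarrow> k \<le> N \<Longrightarrow> 0 < ratio t k \<and> ratio t k \<le> r\<^sub>s"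
    and "\<And>n. 1 \<le> n \<Longrightarrow> n \<le> N \<Longrightarrow>
       step t n \<le> ((1 + 2 * ratio t n) * (2 * r\<^sub>s\<^sup>2 / (1 + r\<^sub>s)\<^sup>2) - (ratio t n)\<^sup>2)
                    / ((2 * r\<^sub>s\<^sup>2 / (1 + r\<^sub>s)\<^sup>2)\<^sup>2 * (1 + ratio t n))
                  * ((1 - 2 * r\<^sub>s\<^sup>2 / (1 + r\<^sub>s)\<^sup>2) / (2 + 4 * \<epsilon>\<^sup>2 / (L / real M)\<^sup>2))"
    and "grid_maxnorm M (u 0) \<le> 1"
  shows "\<forall>k. 1 \<le> k \<and> k \<le> N \<longrightarrow> grid_maxnorm M (u k) \<le> 1"
proof -
  define \<eta> where "\<eta> = 2 * r\<^sub>s\<^sup>2 / (1 + r\<^sub>s)\<^sup>2"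
  have \<eta>: "0 < \<eta>" "\<eta> < 1"
    using bdf2_eta_bounds[of r\<^sub>s] assms(8,9) unfolding \<eta>_def by auto
  have "0 < L / real M"
    using assms(1,2) by simp
  \<comment> \<open>For n = 0 the bound pairs u 0 with itself, since 0 - 1 = 0 in nat.\<close>
  have "bdf2_bounded M \<eta> (u n) (u (n - 1))" if "n \<le> N" for n
    using that
  proof (induction n)
    case 0
    then show ?case
      using bdf2_bounded_self \<eta>(2) assms(12) grid_maxnorm_le_iff[OF assms(2)] by auto
  next
    case (Suc n)
    have "0 < step t (Suc n)"
      using assms(6)[of "Suc n"] Suc.prems by (simp add: step_def)
    moreover have "0 \<le> ratio t (Suc n)"
      using assms(10)[of "Suc n"] Suc.prems by (cases n) (auto simp: ratio_def)
    ultimately show ?case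
      using Suc assms(2) assms(11)[of "Suc n", folded \<eta>_def] scheme[of "Suc n"] \<eta> \<open>0 < L / real M\<close>
      by (intro D2_step_bdf2_bounded) auto
  qed
  then show ?thesis
    using grid_maxnorm_le_iff[OF assms(2)] unfolding bdf2_bounded_def by auto
qed

end
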